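(* For every field $\mathbb{F}$, all $n,d\ge1$ and every $n^d\times n^d$ matrix $M$ over $\mathbb{F}$, \[ \mathcal L_{\mathsf{nc,sm}}\big(\mathrm{ShiftedTensor}(M)\big)\ \ge\ \frac{\mathrm{PT\text{-}rank}(M)}{n^{\,d-\log_2 d+1}}. \]
   Context: Non-commutative set-multilinear formula size of a tensor $A:[N]^k\to\mathbb{F}$: if $k=1$, $\mathcal L_{\mathsf{nc,sm}}(A)$ is $1$ if $A\ne0$ and $0$ otherwise; if $k\ge2$ it is the minimum of $\sum_i(\mathcal L_{\mathsf{nc,sm}}(B_i)+\mathcal L_{\mathsf{nc,sm}}(C_i))$ over finite families $(e_i,f_i,B_i,C_i)$ with positive integers $e_i+f_i=k$, $B_i:[N]^{e_i}\to\mathbb{F}$, $C_i:[N]^{f_i}\to\mathbb{F}$, $A=\sum_iB_i\otimes C_i$ (where $(B\otimes C)(x,y)=B(x)C(y)$, concatenating coordinates in order). Pairing $\langle i,j\rangle=(i-1)n+j$. $\mathrm{ShiftedTensor}(M):[n^2]^{d+1}\to\mathbb{F}$, $\mathrm{ShiftedTensor}(M)(\langle p,i_1\rangle,\langle j_1,i_2\rangle,\dots,\langle j_{d-1},i_d\rangle,\langle j_d,q\rangle)=\mathbb 1\{p=q=1\}M_{(i_1,\dots,i_d),(j_1,\dots,j_d)}$. Partial transposes: for $k\in[d]$, $M^{\top_k}$ swaps the $k$-th row index with the $k$-th column index; $M^{\top_\kappa}$ composes these over $k\in\kappa\subseteq[d]$. $M$ is PT-basic if $\mathrm{rank}(M^{\top_\kappa})=1$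 for some $\kappa$; $\mathrm{PT\text{-}rank}(M)$ is the least number of PT-basic matrices summing to $M$. Logs base 2. *)

theory Defs
  imports Complex_Main
begin

text \<open>Tensors A : [N]^k -> F are represented as functions on lists of naturals;
only their values on the domain tdom N k (lists of length k with entries in 1..N)
are relevant.\<close>

definition tdom :: "nat \<Rightarrow> nat \<Rightarrow> nat list set" where
  "tdom N k = {x. length x = k \<and> set x \<subseteq> {1..N}}"

text \<open>The tensor product of
B (order e) and C is (B \<otimes> C)(x) = B(take e x) * C(drop e x).  The clamping
min/max in the recursive calls is inert since 1 \<le> e i < k is required; it only
makes termination syntactically evident.\<close>

function Lncsm :: "nat \<Rightarrow> nat \<Rightarrow> (nat list \<Rightarrow> 'a::field) \<Rightarrow> nat" where
  "Lncsm N k A =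
     (if k \<le> 1 then (if (\<exists>x\<in>tdom N k. A x \<noteq> 0) then 1 else 0)
      else Inf {(\<Sum>i<m. Lncsm N (min (e i) (k - 1)) (B i) + Lncsm N (k - max 1 (e i)) (C i))
                 | (m::nat) e B C. (\<forall>i<m. 1 \<le> e i \<and> e i < k) \<and>
                     (\<forall>x\<in>tdom N k. A x = (\<Sum>i<m. B i (take (e i) x) * C i (drop (e i) x)))})"
  by auto
termination by (relation "measure (\<lambda>(N, k, A). k)") auto

definition pairing :: "nat \<Rightarrow> nat \<Rightarrow> nat \<Rightarrow> nat" where
  "pairing n i j = (i - 1) * n + j"
definition unpair1 :: "nat \<Rightarrow> nat \<Rightarrow> nat" where
  "unpair1 n x = (x - 1) div n + 1"
definition unpair2 :: "nat \<Rightarrow> nat \<Rightarrow> nat" where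
  "unpair2 n x = (x - 1) mod n + 1"

text \<open>Matrices of size n^d x n^d with rows/columns indexed by tuples in [n]^d
(lists of length d with entries in 1..n).\<close>

text \<open>ShiftedTensor(M) : [n^2]^(d+1) -> F.  Coordinate t (0..d) is <a_t, b_t>;
p = a_0, i_t = b_(t-1), j_t = a_t (t = 1..d), q = b_d.\<close>
definition ShiftedTensor :: "nat \<Rightarrow> nat \<Rightarrow> (nat list \<Rightarrow> nat list \<Rightarrow> 'a::field) \<Rightarrow> nat list \<Rightarrow> 'a" where
  "ShiftedTensor n d M x =
     (if unpair1 n (x ! 0) = 1 \<and> unpair2 n (x ! d) = 1
      then M (map (unpair2 n) (take d x)) (map (unpair1 n) (drop 1 x)) else 0)"

definition ptrans :: "nat set \<Rightarrow> nat \<Rightarrow> (nat list \<Rightarrow> nat list \<Rightarrow> 'a) \<Rightarrow> nat list \<Rightarrow> nat list \<Rightarrow> 'a" where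
  "ptrans \<kappa> d M r c =
     M (map (\<lambda>t. if Suc t \<in> \<kappa> then c ! t else r ! t) [0..<d])
       (map (\<lambda>t. if Suc t \<in> \<kappa> then r ! t else c ! t) [0..<d])"

definition rank_one :: "nat \<Rightarrow> nat \<Rightarrow> (nat list \<Rightarrow> nat list \<Rightarrow> 'a::field) \<Rightarrow> bool" where
  "rank_one n d M \<longleftrightarrow>
     (\<exists>r\<in>tdom n d. \<exists>c\<in>tdom n d. M r c \<noteq> 0) \<and>
     (\<exists>u v. \<forall>r\<in>tdom n d. \<forall>c\<in>tdom n d. M r c = u r * v c)"

definition PT_basic :: "nat \<Rightarrow> nat \<Rightarrow> (nat list \<Rightarrow> nat list \<Rightarrow> 'a::field) \<Rightarrow> bool" where
  "PT_basic n d M \<longleftrightarrow> (\<exists>\<kappa>\<subseteq>{1..d}. rank_one n d (ptrans \<kappa> d M))"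

definition PT_rank :: "nat \<Rightarrow> nat \<Rightarrow> (nat list \<Rightarrow> nat list \<Rightarrow> 'a::field) \<Rightarrow> nat" where
  "PT_rank n d M = (LEAST s. \<exists>A. (\<forall>i<s. PT_basic n d (A i)) \<and>
      (\<forall>r\<in>tdom n d. \<forall>c\<in>tdom n d. M r c = (\<Sum>i<s. A i r c)))"

end

(*
  Follow an optimal formula for a tensor of order k from the root, always descending into
  the child of larger order and absorbing the other child whole into one of two factors.
  Multiplying out writes the tensor as a sum of at most L(A) products f(x) g(x), where f reads
  only the "red" and g only the "blue" coordinates.  Each absorbed segment is coloured opposite
  to its neighbour, so every step adds a colour change while the order shrinks by at most a
  factor of two; hence there are at least log2 k - 1 colour changes.

  In ShiftedTensor(M) coordinate t carries the row index r_t and the column index c_(t-1).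
  At a boundary t where the colour changes, r_t and c_t are read by different factors, and a
  partial transpose at t makes the red factor a function of the row and the blue factor a
  function of the column.  At the d - (number of changes) <= d - log2 d + 1 monochromatic
  boundaries, c_t is fixed by summing over its n values.  Each product thus contributes at
  most n^(d - log2 d + 1) PT-basic matrices to M.
*)

theory Submission
  imports Defs "HOL-Library.FuncSet"
begin

declare Lncsm.simps[simp del]

section \<open>Products of factors reading complementary coordinates\<close>

definition depends_only_on :: "nat \<Rightarrow> nat set \<Rightarrow> (nat list \<Rightarrow> 'a) \<Rightarrow> bool" where
  "depends_only_on k S f \<longleftrightarrow>
     (\<forall>x y. length x = k \<longrightarrow> length y = k \<longrightarrow> (\<forall>t\<in>S. t < k \<longrightarrow> x ! t = y ! t) \<longrightarrow> f x = f y)"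

lemma depends_only_on_take_mult:
  assumes f: "depends_only_on e S f" and "e \<le> k" "\<forall>t\<in>S. t < e \<longrightarrow> t \<in> S'"
    and "b \<Longrightarrow> {e..} \<subseteq> S'"
  shows "depends_only_on k S' (\<lambda>x. f (take e x) * (if b then g (drop e x) else 1))"
  unfolding depends_only_on_def
proof (intro allI impI)
  fix x y :: "nat list"
  assume xy: "length x = k" "length y = k" "\<forall>t\<in>S'. t < k \<longrightarrow> x ! t = y ! t"
  have "f (take e x) = f (take e y)"
    using f xy assms(2,3) unfolding depends_only_on_def by (simp add: min_def)
  moreover have "drop e x = drop e y" if b
    using xy assms(4)[OF that] by (intro nth_equalityI) (auto simp: subset_eq)
  ultimately show "f (take e x) * (if b then g (drop e x) else 1) = f (take e y) * (if b then g (drop e y) else 1)"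
    by simp
qed

lemma depends_only_on_mult_drop:
  assumes f: "depends_only_on (k - e) S f" and "\<forall>t\<in>S. t + e \<in> S'" and "b \<Longrightarrow> {..<e} \<subseteq> S'"
  shows "depends_only_on k S' (\<lambda>x. (if b then g (take e x) else 1) * f (drop e x))"
  unfolding depends_only_on_def
proof (intro allI impI)
  fix x y :: "nat list"
  assume xy: "length x = k" "length y = k" "\<forall>t\<in>S'. t < k \<longrightarrow> x ! t = y ! t"
  have "f (drop e x) = f (drop e y)"
    using f xy assms(2) unfolding depends_only_on_def by (simp add: add.commute less_diff_conv)
  moreover have "take e x = take e y" if b
    using xy assms(3)[OF that] by (intro nth_equalityI) (auto simp: subset_eq)
  ultimately show "(if b then g (take e x) else 1) * f (drop e x) = (if b then g (take e y) else 1) * f (drop e y)"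
    by simp
qed

definition colour_changes :: "nat \<Rightarrow> (nat \<Rightarrow> bool) \<Rightarrow> nat" where
  "colour_changes k col = card {t. Suc t < k \<and> col t \<noteq> col (Suc t)}"

record 'a split_product =
  red :: "nat list \<Rightarrow> 'a"
  blue :: "nat list \<Rightarrow> 'a"
  colour :: "nat \<Rightarrow> bool"

definition split_value :: "'a::times split_product \<Rightarrow> nat list \<Rightarrow> 'a" where
  "split_value p x = red p x * blue p x"

definition well_split :: "nat \<Rightarrow> 'a split_product \<Rightarrow> bool" where
  "well_split k p \<longleftrightarrow>
     depends_only_on k {t. colour p t} (red p) \<and> depends_only_on k {t. \<not> colour p t} (blue p) \<and>
     k \<le> 2 ^ Suc (colour_changes k (colour p))"

definition extend_right :: "nat \<Rightarrow> (nat list \<Rightarrow> 'a::monoid_mult) \<Rightarrow> 'a split_product \<Rightarrow> 'a split_product"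
  where
  "extend_right e C p =
     \<lparr>red = \<lambda>x. red p (take e x) * (if \<not> colour p (e - 1) then C (drop e x) else 1),
      blue = \<lambda>x. blue p (take e x) * (if colour p (e - 1) then C (drop e x) else 1),
      colour = \<lambda>t. if t < e then colour p t else \<not> colour p (e - 1)\<rparr>"

definition extend_left :: "nat \<Rightarrow> (nat list \<Rightarrow> 'a::monoid_mult) \<Rightarrow> 'a split_product \<Rightarrow> 'a split_product"
  where
  "extend_left e B p =
     \<lparr>red = \<lambda>x. (if \<not> colour p 0 then B (take e x) else 1) * red p (drop e x),
      blue = \<lambda>x. (if colour p 0 then B (take e x) else 1) * blue p (drop e x),
      colour = \<lambda>t. if t < e then \<not> colour p 0 else colour p (t - e)\<rparr>"

lemma split_value_extend_right:
  fixes C :: "nat list \<Rightarrow> 'a::comm_monoid_mult"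
  shows "split_value (extend_right e C p) x = split_value p (take e x) * C (drop e x)"
  unfolding extend_right_def split_value_def by (simp add: ac_simps)

lemma split_value_extend_left:
  fixes B :: "nat list \<Rightarrow> 'a::comm_monoid_mult"
  shows "split_value (extend_left e B p) x = B (take e x) * split_value p (drop e x)"
  unfolding extend_left_def split_value_def by (simp add: ac_simps)

lemma colour_changes_extend_right:
  assumes "1 \<le> e" "e < k"
  shows "colour_changes k (colour (extend_right e C p)) = Suc (colour_changes e (colour p))"
proof -
  let ?changes = "{t. Suc t < e \<and> colour p t \<noteq> colour p (Suc t)}"
  have "{t. Suc t < k \<and> colour (extend_right e C p) t \<noteq> colour (extend_right e C p) (Suc t)}
        = insert (e - 1) ?changes"
    using assms by (auto simp: extend_right_def split: if_splits)
  moreover have "finite ?changes" "e - 1 \<notin> ?changes"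
    using assms by (auto intro: finite_subset[of _ "{..<e}"])
  ultimately show ?thesis unfolding colour_changes_def by simp
qed

lemma colour_changes_extend_left:
  assumes "1 \<le> e" "e < k"
  shows "colour_changes k (colour (extend_left e B p)) = Suc (colour_changes (k - e) (colour p))"
proof -
  let ?changes = "{t. Suc t < k - e \<and> colour p t \<noteq> colour p (Suc t)}"
  have "{t. Suc t < k \<and> colour (extend_left e B p) t \<noteq> colour (extend_left e B p) (Suc t)}
        = insert (e - 1) ((\<lambda>t. t + e) ` ?changes)"
  proof (rule set_eqI)
    fix t
    show "t \<in> {t. Suc t < k \<and> colour (extend_left e B p) t \<noteq> colour (extend_left e B p) (Suc t)}
          \<longleftrightarrow> t \<in> insert (e - 1) ((\<lambda>t. t + e) ` ?changes)"
    proof (cases "t < e")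
      case True
      then show ?thesis using assms by (cases "Suc t < e") (auto simp: extend_left_def)
    next
      case False
      then obtain s where "t = s + e" by (metis le_add_diff_inverse2 not_less)
      then show ?thesis using assms by (auto simp: extend_left_def image_iff)
    qed
  qed
  moreover have "finite ?changes" "e - 1 \<notin> (\<lambda>t. t + e) ` ?changes"
    using assms by (auto intro: finite_subset[of _ "{..<k}"])
  ultimately show ?thesis unfolding colour_changes_def by (simp add: card_image)
qed

lemma well_split_extend_right:
  assumes "well_split e p" "1 \<le> e" "e < k" "k \<le> 2 * e"
  shows "well_split k (extend_right e C p)"
  using assms colour_changes_extend_right[OF assms(2,3), of C p]
  unfolding well_split_def
  by (auto simp: extend_right_def intro!: depends_only_on_take_mult)

lemma well_split_extend_left:
  assumes "well_split (k - e) p" "1 \<le> e" "e < k" "k \<le> 2 * (k - e)"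
  shows "well_split k (extend_left e B p)"
  using assms colour_changes_extend_left[OF assms(2,3), of B p]
  unfolding well_split_def
  by (auto simp: extend_left_def intro!: depends_only_on_mult_drop)

section \<open>Heavy-path decomposition of a formula\<close>

lemma take_in_tdom: "x \<in> tdom N k \<Longrightarrow> take e x \<in> tdom N (min e k)"
  by (auto simp: tdom_def dest: in_set_takeD)

lemma drop_in_tdom: "x \<in> tdom N k \<Longrightarrow> drop e x \<in> tdom N (k - e)"
  by (auto simp: tdom_def dest: in_set_dropD)

definition split_decomposition :: "nat \<Rightarrow> nat \<Rightarrow> (nat list \<Rightarrow> 'a::comm_ring_1) \<Rightarrow> 'a split_product list \<Rightarrow> bool"
  where
  "split_decomposition N k A ps \<longleftrightarrow>
     (\<forall>p\<in>set ps. well_split k p) \<and> (\<forall>x\<in>tdom N k. A x = (\<Sum>p\<leftarrow>ps. split_value p x))"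

lemma split_decomposition_extend_right:
  assumes "split_decomposition N e B ps" "1 \<le> e" "e < k" "k \<le> 2 * e"
  shows "split_decomposition N k (\<lambda>x. B (take e x) * C (drop e x)) (map (extend_right e C) ps)"
proof -
  have "B (take e x) * C (drop e x) = (\<Sum>p\<leftarrow>map (extend_right e C) ps. split_value p x)"
    if "x \<in> tdom N k" for x
  proof -
    have "take e x \<in> tdom N e" using take_in_tdom[OF that, of e] assms(3) by simp
    then show ?thesis
      using assms(1) by (simp add: split_decomposition_def sum_list_mult_const o_def split_value_extend_right)
  qed
  then show ?thesis
    using assms by (auto simp: split_decomposition_def intro!: well_split_extend_right)
qed

lemma split_decomposition_extend_left:
  assumes "split_decomposition N (k - e) C ps" "1 \<le> e" "e < k" "k \<le> 2 * (k - e)"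
  shows "split_decomposition N k (\<lambda>x. B (take e x) * C (drop e x)) (map (extend_left e B) ps)"
proof -
  have "B (take e x) * C (drop e x) = (\<Sum>p\<leftarrow>map (extend_left e B) ps. split_value p x)"
    if "x \<in> tdom N k" for x
    using assms(1) drop_in_tdom[OF that, of e]
    by (simp add: split_decomposition_def sum_list_const_mult o_def split_value_extend_left)
  then show ?thesis
    using assms by (auto simp: split_decomposition_def intro!: well_split_extend_left)
qed

lemma split_decomposition_sum:
  assumes "\<forall>i<m. split_decomposition N k (A i) (ps i)"
  shows "split_decomposition N k (\<lambda>x. \<Sum>i<m. A i x) (concat (map ps [0..<m]))"
proof -
  have sum_list_concat: "sum_list (map f (concat xss)) = (\<Sum>xs\<leftarrow>xss. sum_list (map f xs))"
    for f :: "_ \<Rightarrow> 'a" and xss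
    by (induction xss) simp_all
  have "(\<Sum>i<m. A i x) = (\<Sum>p\<leftarrow>concat (map ps [0..<m]). split_value p x)" if "x \<in> tdom N k" for x
    using assms that
    by (simp add: split_decomposition_def sum_list_concat interv_sum_list_conv_sum_set_nat
        atLeast0LessThan o_def)
  then show ?thesis
    using assms by (auto simp: split_decomposition_def)
qed

lemma split_decomposition_order_one:
  "\<exists>ps. length ps \<le> Lncsm N 1 A \<and> split_decomposition N 1 A ps"
proof (cases "\<exists>x\<in>tdom N 1. A x \<noteq> 0")
  case True
  let ?p = "\<lparr>red = A, blue = \<lambda>_. 1, colour = \<lambda>_. True\<rparr>"
  have "well_split 1 ?p"
    unfolding well_split_def depends_only_on_def by (auto simp: length_Suc_conv)
  then have "split_decomposition N 1 A [?p]"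
    by (simp add: split_decomposition_def split_value_def)
  moreover have "Lncsm N 1 A = 1"
    using True by (subst Lncsm.simps) simp
  ultimately show ?thesis by (intro exI[of _ "[?p]"]) simp
next
  case False
  then show ?thesis by (intro exI[of _ "[]"]) (simp add: split_decomposition_def)
qed

lemma expand_first_coordinate:
  fixes A :: "nat list \<Rightarrow> 'a::semiring_1"
  assumes "x \<in> tdom N k" "1 \<le> k"
  shows "A x = (\<Sum>i<N. (if take 1 x = [Suc i] then 1 else 0) * A (Suc i # drop 1 x))"
proof -
  from assms obtain a y where x: "x = a # y"
    by (cases x) (auto simp: tdom_def)
  with assms have a: "1 \<le> a" "a \<le> N"
    by (auto simp: tdom_def)
  have "(\<Sum>i<N. (if take 1 x = [Suc i] then 1 else 0) * A (Suc i # drop 1 x))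
        = (\<Sum>i<N. if i = a - 1 then A x else 0)"
    using a by (intro sum.cong) (auto simp: x)
  also have "\<dots> = A x"
    using a by simp linarith
  finally show ?thesis ..
qed

lemma Lncsm_optimal_split:
  fixes A :: "nat list \<Rightarrow> 'a::field"
  assumes "2 \<le> k"
  obtains m :: nat and e and B C :: "nat \<Rightarrow> nat list \<Rightarrow> 'a"
  where "Lncsm N k A = (\<Sum>i<m. Lncsm N (e i) (B i) + Lncsm N (k - e i) (C i))"
    and "\<forall>i<m. 1 \<le> e i \<and> e i < k"
    and "\<forall>x\<in>tdom N k. A x = (\<Sum>i<m. B i (take (e i) x) * C i (drop (e i) x))"
proof -
  let ?S = "{(\<Sum>i<m. Lncsm N (min (e i) (k - 1)) (B i) + Lncsm N (k - max 1 (e i)) (C i))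
             | (m::nat) e B C. (\<forall>i<m. 1 \<le> e i \<and> e i < k) \<and>
                 (\<forall>x\<in>tdom N k. A x = (\<Sum>i<m. B i (take (e i) x) * C i (drop (e i) x)))}"
  have Lncsm_eq: "Lncsm N k A = Inf ?S"
    using assms by (subst Lncsm.simps) simp
  let ?B = "\<lambda>i y. if y = [Suc i] then 1 else 0 :: 'a" and ?C = "\<lambda>i z. A (Suc i # z)"
  have "(\<Sum>i<N. Lncsm N (min 1 (k - 1)) (?B i) + Lncsm N (k - max 1 1) (?C i)) \<in> ?S"
    unfolding mem_Collect_eq
    by (rule exI[of _ N], rule exI[of _ "\<lambda>_. 1"], rule exI[of _ ?B], rule exI[of _ ?C])
      (use assms expand_first_coordinate[of _ N k A] in auto)
  then have "?S \<noteq> {}" by blast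
  then have "Inf ?S \<in> ?S" by (rule Inf_nat_def1)
  then obtain m e and B C :: "nat \<Rightarrow> nat list \<Rightarrow> 'a"
    where L: "Lncsm N k A = (\<Sum>i<m. Lncsm N (min (e i) (k - 1)) (B i) + Lncsm N (k - max 1 (e i)) (C i))"
      and e: "\<forall>i<m. 1 \<le> e i \<and> e i < k"
      and A: "\<forall>x\<in>tdom N k. A x = (\<Sum>i<m. B i (take (e i) x) * C i (drop (e i) x))"
    unfolding Lncsm_eq[symmetric] by blast
  have "Lncsm N k A = (\<Sum>i<m. Lncsm N (e i) (B i) + Lncsm N (k - e i) (C i))"
    unfolding L using e by (intro sum.cong) auto
  then show ?thesis using e A by (rule that)
qed

lemma split_decomposition_product:
  assumes "1 \<le> e" "e < k"
    and B: "\<exists>ps. length ps \<le> lB \<and> split_decomposition N e B ps"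
    and C: "\<exists>ps. length ps \<le> lC \<and> split_decomposition N (k - e) C ps"
  shows "\<exists>ps. length ps \<le> lB + lC \<and> split_decomposition N k (\<lambda>x. B (take e x) * C (drop e x)) ps"
proof (cases "k \<le> 2 * e")
  case True
  obtain ps where "length ps \<le> lB" "split_decomposition N e B ps"
    using B by blast
  then show ?thesis
    using split_decomposition_extend_right[of N e B ps k C] assms(1,2) True
    by (intro exI[of _ "map (extend_right e C) ps"]) auto
next
  case False
  obtain ps where "length ps \<le> lC" "split_decomposition N (k - e) C ps"
    using C by blast
  then show ?thesis
    using split_decomposition_extend_left[of N k e C ps B] assms(1,2) False
    by (intro exI[of _ "map (extend_left e B) ps"]) auto
qed

lemma Lncsm_split_decomposition:
  fixes A :: "nat list \<Rightarrow> 'a::field"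
  assumes "1 \<le> k"
  shows "\<exists>ps. length ps \<le> Lncsm N k A \<and> split_decomposition N k A ps"
  using assms
proof (induction k arbitrary: A rule: less_induct)
  case (less k)
  consider "k = 1" | "2 \<le> k" using less.prems by linarith
  then show ?case
  proof cases
    case 1
    then show ?thesis using split_decomposition_order_one by blast
  next
    case 2
    obtain m e and B C :: "nat \<Rightarrow> nat list \<Rightarrow> 'a"
      where L: "Lncsm N k A = (\<Sum>i<m. Lncsm N (e i) (B i) + Lncsm N (k - e i) (C i))"
        and e: "\<forall>i<m. 1 \<le> e i \<and> e i < k"
        and A: "\<forall>x\<in>tdom N k. A x = (\<Sum>i<m. B i (take (e i) x) * C i (drop (e i) x))"
      by (rule Lncsm_optimal_split[OF 2])
    have "\<exists>ps. length ps \<le> Lncsm N (e i) (B i) + Lncsm N (k - e i) (C i) \<and>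
            split_decomposition N k (\<lambda>x. B i (take (e i) x) * C i (drop (e i) x)) ps"
      if "i < m" for i
      using e that by (intro split_decomposition_product less.IH) auto
    then obtain ps where ps: "\<forall>i<m. length (ps i) \<le> Lncsm N (e i) (B i) + Lncsm N (k - e i) (C i) \<and>
        split_decomposition N k (\<lambda>x. B i (take (e i) x) * C i (drop (e i) x)) (ps i)"
      by metis
    have "length (concat (map ps [0..<m])) \<le> Lncsm N k A"
      unfolding L length_concat using ps
      by (simp add: interv_sum_list_conv_sum_set_nat atLeast0LessThan o_def, intro sum_mono) auto
    moreover have "split_decomposition N k (\<lambda>x. \<Sum>i<m. B i (take (e i) x) * C i (drop (e i) x))
        (concat (map ps [0..<m]))"
      using ps by (intro split_decomposition_sum) auto
    then have "split_decomposition N k A (concat (map ps [0..<m]))"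
      using A by (simp add: split_decomposition_def)
    ultimately show ?thesis by blast
  qed
qed

lemma pairing_unpair:
  assumes "1 \<le> a" "a \<le> n" "1 \<le> b" "b \<le> n"
  shows "pairing n a b \<in> {1..n ^ 2}" "unpair1 n (pairing n a b) = a" "unpair2 n (pairing n a b) = b"
proof -
  have "(a - 1) * n + b \<le> (n - 1) * n + n"
    using assms by (intro add_mono mult_right_mono) auto
  also have "\<dots> = n ^ 2"
    using assms by (cases n) (auto simp: power2_eq_square)
  finally show "pairing n a b \<in> {1..n ^ 2}"
    using assms by (simp add: pairing_def)
  have "a = Suc (a - 1)" "b = Suc (b - 1)" "b - 1 < n"
    using assms by auto
  then obtain a' b' where "a = Suc a'" "b = Suc b'" "b' < n"
    by blast
  then show "unpair1 n (pairing n a b) = a" "unpair2 n (pairing n a b) = b"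
    by (simp_all add: unpair1_def unpair2_def pairing_def)
qed

definition shifted_point :: "nat \<Rightarrow> nat list \<Rightarrow> nat list \<Rightarrow> nat list" where
  "shifted_point n r c = map2 (pairing n) (1 # c) (r @ [1])"

lemma shifted_point_nth:
  "length r = length c \<Longrightarrow> t \<le> length r \<Longrightarrow>
   shifted_point n r c ! t = pairing n ((1 # c) ! t) ((r @ [1]) ! t)"
  by (simp add: shifted_point_def del: nth_Cons' nth_append)

lemma map_unpair_map2_pairing:
  assumes "length as = length bs" "set as \<subseteq> {1..n}" "set bs \<subseteq> {1..n}"
  shows "map (unpair1 n) (map2 (pairing n) as bs) = as" "map (unpair2 n) (map2 (pairing n) as bs) = bs"
  using assms by (induction as bs rule: list_induct2) (auto simp: pairing_unpair)

lemma shifted_point_in_tdom: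
  assumes "1 \<le> n" "r \<in> tdom n d" "c \<in> tdom n d"
  shows "shifted_point n r c \<in> tdom (n ^ 2) (Suc d)"
proof -
  have "pairing n a b \<in> {1..n ^ 2}" if "(a, b) \<in> set (zip (1 # c) (r @ [1]))" for a b
  proof -
    have "a \<in> set (1 # c)" "b \<in> set (r @ [1])"
      using that by (auto dest: set_zip_leftD set_zip_rightD)
    then show ?thesis
      using assms by (intro pairing_unpair(1)) (auto simp: tdom_def)
  qed
  then show ?thesis
    using assms by (auto simp: tdom_def shifted_point_def)
qed

lemma ShiftedTensor_shifted_point:
  assumes "1 \<le> n" "r \<in> tdom n d" "c \<in> tdom n d"
  shows "ShiftedTensor n d M (shifted_point n r c) = M r c"
proof -
  let ?x = "shifted_point n r c"
  have r: "length r = d" and c: "length c = d"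
    using assms by (simp_all add: tdom_def)
  have x: "length ?x = Suc d"
    using r c by (simp add: shifted_point_def)
  have u1: "map (unpair1 n) ?x = 1 # c" and u2: "map (unpair2 n) ?x = r @ [1]"
    using assms map_unpair_map2_pairing[of "1 # c" "r @ [1]" n] unfolding shifted_point_def
    by (auto simp: tdom_def)
  have "unpair1 n (?x ! 0) = (1 # c) ! 0"
    using x by (metis u1 nth_map zero_less_Suc)
  moreover have "unpair2 n (?x ! d) = 1"
    using x r by (metis u2 nth_map lessI nth_append_length)
  moreover have "map (unpair2 n) (take d ?x) = r"
    using arg_cong[OF u2, of "take d"] r by (simp add: take_map)
  moreover have "map (unpair1 n) (drop 1 ?x) = c"
    using arg_cong[OF u1, of "drop 1"] by (simp add: drop_map)
  ultimately show ?thesis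
    using r by (simp add: ShiftedTensor_def)
qed

section \<open>Slices and partial transposes\<close>

definition monochromatic_boundaries :: "nat \<Rightarrow> (nat \<Rightarrow> bool) \<Rightarrow> nat set" where
  "monochromatic_boundaries d col = {t. t < d \<and> col t = col (Suc t)}"

lemma finite_monochromatic_boundaries: "finite (monochromatic_boundaries d col)"
  unfolding monochromatic_boundaries_def by simp

definition override :: "nat set \<Rightarrow> (nat \<Rightarrow> nat) \<Rightarrow> nat list \<Rightarrow> nat list" where
  "override S z c = map (\<lambda>t. if t \<in> S then z t else c ! t) [0..<length c]"

lemma length_override [simp]: "length (override S z c) = length c"
  by (simp add: override_def)

lemma override_nth: "t < length c \<Longrightarrow> override S z c ! t = (if t \<in> S then z t else c ! t)"
  by (simp add: override_def)

text \<open>Overriding the column entries at monochromatic boundaries by \<open>z\<close> makes the product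
  independent of them; only the indicator still reads them, and it splits into a row part and
  a column part.\<close>

definition slice :: "nat \<Rightarrow> nat \<Rightarrow> 'a split_product \<Rightarrow> (nat \<Rightarrow> nat) \<Rightarrow> nat list \<Rightarrow> nat list \<Rightarrow> 'a::comm_ring_1"
  where
  "slice n d p z r c =
     (let S = monochromatic_boundaries d (colour p)
      in (\<Prod>t\<in>S. if c ! t = z t then 1 else 0) * split_value p (shifted_point n r (override S z c)))"

lemma sum_slice:
  assumes "c \<in> tdom n d"
  shows "(\<Sum>z \<in> monochromatic_boundaries d (colour p) \<rightarrow>\<^sub>E {1..n}. slice n d p z r c)
         = split_value p (shifted_point n r c)"
proof -
  let ?S = "monochromatic_boundaries d (colour p)"
  let ?z = "restrict (\<lambda>t. c ! t) ?S"
  have c: "length c = d" "set c \<subseteq> {1..n}"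
    using assms by (auto simp: tdom_def)
  have z: "?z \<in> ?S \<rightarrow>\<^sub>E {1..n}"
    using c by (auto simp: monochromatic_boundaries_def dest!: nth_mem)
  have "slice n d p z r c = (if z = ?z then split_value p (shifted_point n r c) else 0)"
    if z_mem: "z \<in> ?S \<rightarrow>\<^sub>E {1..n}" for z
  proof (cases "z = ?z")
    case True
    have "override ?S z c = c"
      using c True by (intro nth_equalityI) (auto simp: override_def)
    then show ?thesis
      using True by (simp add: slice_def Let_def)
  next
    case False
    then obtain t where "t \<in> ?S" "z t \<noteq> c ! t"
      using z_mem by (auto simp: PiE_def extensional_def fun_eq_iff split: if_splits)
    then have "(\<Prod>t\<in>?S. if c ! t = z t then 1 else 0) = (0::'a)"
      by (intro prod_zero finite_monochromatic_boundaries) (auto intro!: bexI[of _ t])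
    then show ?thesis
      using False by (simp add: slice_def Let_def)
  qed
  then have "(\<Sum>z \<in> ?S \<rightarrow>\<^sub>E {1..n}. slice n d p z r c)
      = (\<Sum>z \<in> ?S \<rightarrow>\<^sub>E {1..n}. if z = ?z then split_value p (shifted_point n r c) else 0)"
    by (intro sum.cong) auto
  also have "\<dots> = split_value p (shifted_point n r c)"
    using z by (subst sum.delta) (simp_all add: finite_PiE finite_monochromatic_boundaries)
  finally show ?thesis .
qed

lemma slice_colour_swap:
  fixes p :: "'a::comm_ring_1 split_product" and d :: nat
  defines "S \<equiv> monochromatic_boundaries d (colour p)"
  assumes "well_split (Suc d) p"
    and lengths: "length r = d" "length c = d" "length r' = d" "length c' = d"
    and r'_nth: "\<And>t. t < d \<Longrightarrow> r' ! t = (if colour p t then r ! t else c ! t)"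
    and c'_nth: "\<And>t. t < d \<Longrightarrow> c' ! t = (if colour p t then c ! t else r ! t)"
  shows "slice n d p z r' c' =
    ((\<Prod>t\<in>S \<inter> {t. \<not> colour p t}. if r ! t = z t then 1 else 0) * red p (shifted_point n r (override S z r))) *
    ((\<Prod>t\<in>S - {t. \<not> colour p t}. if c ! t = z t then 1 else 0) * blue p (shifted_point n c (override S z c)))"
proof -
  let ?B = "{t. \<not> colour p t}"
  have red_dep: "depends_only_on (Suc d) {t. colour p t} (red p)"
    and blue_dep: "depends_only_on (Suc d) ?B (blue p)"
    using assms(2) by (simp_all add: well_split_def)
  have "(\<Prod>t\<in>S. if c' ! t = z t then 1 else 0)
      = (\<Prod>t\<in>S \<inter> ?B. if c' ! t = z t then 1 else 0) * (\<Prod>t\<in>S - ?B. if c' ! t = z t then (1::'a) else 0)"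
    unfolding S_def by (rule prod.Int_Diff[OF finite_monochromatic_boundaries])
  also have "\<dots> = (\<Prod>t\<in>S \<inter> ?B. if r ! t = z t then 1 else 0) * (\<Prod>t\<in>S - ?B. if c ! t = z t then 1 else 0)"
    by (intro arg_cong2[where f = "(*)"] prod.cong) (auto simp: c'_nth S_def monochromatic_boundaries_def)
  finally have indicator: "(\<Prod>t\<in>S. if c' ! t = z t then 1 else 0)
      = (\<Prod>t\<in>S \<inter> ?B. if r ! t = z t then 1 else 0) * (\<Prod>t\<in>S - ?B. if c ! t = z t then (1::'a) else 0)" .
  have red_agree: "\<forall>t\<in>{t. colour p t}. t < Suc d \<longrightarrow>
      shifted_point n r' (override S z c') ! t = shifted_point n r (override S z r) ! t"
    using lengths by (auto simp: shifted_point_nth override_nth r'_nth c'_nth S_def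
        monochromatic_boundaries_def nth_Cons' nth_append)
  have red: "red p (shifted_point n r' (override S z c')) = red p (shifted_point n r (override S z r))"
    by (rule red_dep[unfolded depends_only_on_def, rule_format])
      (use red_agree lengths in \<open>simp_all add: shifted_point_def\<close>)
  have blue_agree: "\<forall>t\<in>?B. t < Suc d \<longrightarrow>
      shifted_point n r' (override S z c') ! t = shifted_point n c (override S z c) ! t"
    using lengths by (auto simp: shifted_point_nth override_nth r'_nth c'_nth S_def
        monochromatic_boundaries_def nth_Cons' nth_append)
  have blue: "blue p (shifted_point n r' (override S z c')) = blue p (shifted_point n c (override S z c))"
    by (rule blue_dep[unfolded depends_only_on_def, rule_format])
      (use blue_agree lengths in \<open>simp_all add: shifted_point_def\<close>)
  show ?thesis
    unfolding slice_def Let_def split_value_def S_def[symmetric] indicator red blue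
    by (simp only: ac_simps)
qed

text \<open>Transposing at the boundaries of blue colour turns every index read by the red factor
  into a row index and every index read by the blue factor into a column index.\<close>

lemma ptrans_slice_factors:
  assumes "well_split (Suc d) p"
  shows "\<exists>u v. \<forall>r\<in>tdom n d. \<forall>c\<in>tdom n d.
           ptrans (Suc ` {t. t < d \<and> \<not> colour p t}) d (slice n d p z) r c = u r * v c"
proof -
  let ?S = "monochromatic_boundaries d (colour p)"
  let ?u = "\<lambda>r. (\<Prod>t\<in>?S \<inter> {t. \<not> colour p t}. if r ! t = z t then 1 else 0) *
    red p (shifted_point n r (override ?S z r))"
  let ?v = "\<lambda>c. (\<Prod>t\<in>?S - {t. \<not> colour p t}. if c ! t = z t then 1 else 0) *
    blue p (shifted_point n c (override ?S z c))"
  have "ptrans (Suc ` {t. t < d \<and> \<not> colour p t}) d (slice n d p z) r c = ?u r * ?v c"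
    if "r \<in> tdom n d" "c \<in> tdom n d" for r c
    unfolding ptrans_def
    by (rule slice_colour_swap[OF assms]) (use that in \<open>simp_all add: tdom_def image_iff\<close>)
  then show ?thesis
    by (intro exI[of _ ?u] exI[of _ ?v] ballI)
qed

lemma ptrans_ptrans:
  assumes "length r = d" "length c = d"
  shows "ptrans \<kappa> d (ptrans \<kappa> d F) r c = F r c"
proof -
  have "map (\<lambda>t. if Suc t \<in> \<kappa> then map (\<lambda>t. if Suc t \<in> \<kappa> then r ! t else c ! t) [0..<d] ! t
                 else map (\<lambda>t. if Suc t \<in> \<kappa> then c ! t else r ! t) [0..<d] ! t) [0..<d] = r"
       "map (\<lambda>t. if Suc t \<in> \<kappa> then map (\<lambda>t. if Suc t \<in> \<kappa> then c ! t else r ! t) [0..<d] ! t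
                 else map (\<lambda>t. if Suc t \<in> \<kappa> then r ! t else c ! t) [0..<d] ! t) [0..<d] = c"
    using assms by (auto intro: nth_equalityI)
  then show ?thesis
    by (simp add: ptrans_def)
qed

lemma PT_basic_or_zero_if_ptrans_factors:
  assumes "\<kappa> \<subseteq> {1..d}"
    and factors: "\<forall>r\<in>tdom n d. \<forall>c\<in>tdom n d. ptrans \<kappa> d F r c = u r * v c"
  shows "PT_basic n d F \<or> (\<forall>r\<in>tdom n d. \<forall>c\<in>tdom n d. F r c = 0)"
proof (cases "\<exists>r\<in>tdom n d. \<exists>c\<in>tdom n d. ptrans \<kappa> d F r c \<noteq> 0")
  case True
  then have "rank_one n d (ptrans \<kappa> d F)"
    using factors by (auto simp: rank_one_def)
  then show ?thesis
    using assms(1) by (auto simp: PT_basic_def)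
next
  case False
  have "F r c = 0" if "r \<in> tdom n d" "c \<in> tdom n d" for r c
  proof -
    let ?r = "map (\<lambda>t. if Suc t \<in> \<kappa> then c ! t else r ! t) [0..<d]"
      and ?c = "map (\<lambda>t. if Suc t \<in> \<kappa> then r ! t else c ! t) [0..<d]"
    have "?r \<in> tdom n d" "?c \<in> tdom n d"
      using that by (auto simp: tdom_def dest!: nth_mem)
    moreover have "F r c = ptrans \<kappa> d F ?r ?c"
      using that ptrans_ptrans[of r d c \<kappa> F] by (simp add: tdom_def ptrans_def[of _ _ "ptrans \<kappa> d F"])
    ultimately show ?thesis
      using False by simp
  qed
  then show ?thesis by blast
qed

lemma slice_PT_basic_or_zero:
  assumes "well_split (Suc d) p"
  shows "PT_basic n d (slice n d p z) \<or> (\<forall>r\<in>tdom n d. \<forall>c\<in>tdom n d. slice n d p z r c = 0)"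
proof -
  obtain u v where "\<forall>r\<in>tdom n d. \<forall>c\<in>tdom n d.
      ptrans (Suc ` {t. t < d \<and> \<not> colour p t}) d (slice n d p z) r c = u r * v c"
    using ptrans_slice_factors[OF assms] by blast
  then show ?thesis
    by (rule PT_basic_or_zero_if_ptrans_factors[rotated]) auto
qed

lemma PT_rank_le_card:
  fixes F :: "'b \<Rightarrow> nat list \<Rightarrow> nat list \<Rightarrow> 'a::field"
  assumes "finite J"
    and basic: "\<forall>j\<in>J. PT_basic n d (F j) \<or> (\<forall>r\<in>tdom n d. \<forall>c\<in>tdom n d. F j r c = 0)"
    and M: "\<forall>r\<in>tdom n d. \<forall>c\<in>tdom n d. M r c = (\<Sum>j\<in>J. F j r c)"
  shows "PT_rank n d M \<le> card J"
proof -
  define J' where "J' = {j\<in>J. PT_basic n d (F j)}"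
  have "finite J'" using assms(1) by (simp add: J'_def)
  then obtain h where h: "bij_betw h {..<card J'} J'"
    using ex_bij_betw_nat_finite by (metis atLeast0LessThan)
  have "M r c = (\<Sum>i<card J'. F (h i) r c)" if "r \<in> tdom n d" "c \<in> tdom n d" for r c
  proof -
    have "M r c = (\<Sum>j\<in>J'. F j r c)"
      using M basic assms(1) that by (simp add: J'_def) (intro sum.mono_neutral_right; auto)
    also have "\<dots> = (\<Sum>i<card J'. F (h i) r c)"
      using sum.reindex_bij_betw[OF h, of "\<lambda>j. F j r c"] by simp
    finally show ?thesis .
  qed
  moreover have "\<forall>i<card J'. PT_basic n d (F (h i))"
    using h by (auto simp: J'_def bij_betw_def)
  ultimately have "PT_rank n d M \<le> card J'"
    unfolding PT_rank_def by (intro Least_le exI[of _ "\<lambda>i. F (h i)"]) blast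
  also have "\<dots> \<le> card J"
    using assms(1) by (intro card_mono) (auto simp: J'_def)
  finally show ?thesis .
qed

lemma card_monochromatic_boundaries:
  "card (monochromatic_boundaries d col) + colour_changes (Suc d) col = d"
proof -
  have "{..<d} = monochromatic_boundaries d col \<union> {t. Suc t < Suc d \<and> col t \<noteq> col (Suc t)}"
    by (auto simp: monochromatic_boundaries_def)
  moreover have "monochromatic_boundaries d col \<inter> {t. Suc t < Suc d \<and> col t \<noteq> col (Suc t)} = {}"
    by (auto simp: monochromatic_boundaries_def)
  ultimately show ?thesis
    unfolding colour_changes_def
    by (metis card_lessThan card_Un_disjoint finite_lessThan finite_Un)
qed

lemma power_card_monochromatic_boundaries_le:
  assumes "well_split (Suc d) p" "1 \<le> d" "1 \<le> n"
  shows "real n ^ card (monochromatic_boundaries d (colour p)) \<le> real n powr (real d - log 2 (real d) + 1)"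
proof -
  let ?c = "colour_changes (Suc d) (colour p)"
  have "d \<le> (2::nat) ^ Suc ?c"
    using assms(1) by (simp add: well_split_def)
  then have "real d \<le> 2 ^ Suc ?c"
    by (metis of_nat_le_iff of_nat_numeral of_nat_power)
  also have "\<dots> = 2 powr real (Suc ?c)"
    by (rule powr_realpow[symmetric]) simp
  finally have "log 2 (real d) \<le> real (Suc ?c)"
    using assms(2) by (subst log_le_iff) auto
  moreover have "real (card (monochromatic_boundaries d (colour p))) = real d - real ?c"
    using card_monochromatic_boundaries[of d "colour p"] by linarith
  ultimately have "real (card (monochromatic_boundaries d (colour p))) \<le> real d - log 2 (real d) + 1"
    by simp
  then show ?thesis
    using assms(3) by (auto simp: powr_realpow[symmetric] intro: powr_mono)
qed

lemma PT_rank_ShiftedTensor_le: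
  assumes "1 \<le> n" "split_decomposition (n ^ 2) (Suc d) (ShiftedTensor n d M) ps"
  shows "PT_rank n d M \<le> (\<Sum>p\<leftarrow>ps. n ^ card (monochromatic_boundaries d (colour p)))"
proof -
  let ?Z = "\<lambda>i. monochromatic_boundaries d (colour (ps ! i)) \<rightarrow>\<^sub>E {1..n}"
  let ?J = "SIGMA i:{..<length ps}. ?Z i"
  have fin: "finite (?Z i)" for i
    by (simp add: finite_PiE finite_monochromatic_boundaries)
  have "PT_rank n d M \<le> card ?J"
  proof (rule PT_rank_le_card[where F = "\<lambda>(i, z). slice n d (ps ! i) z"])
    show "finite ?J" using fin by auto
    show "\<forall>j\<in>?J. PT_basic n d ((\<lambda>(i, z). slice n d (ps ! i) z) j) \<or>
        (\<forall>r\<in>tdom n d. \<forall>c\<in>tdom n d. (\<lambda>(i, z). slice n d (ps ! i) z) j r c = 0)"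
      using assms(2) by (auto simp: split_decomposition_def intro!: slice_PT_basic_or_zero)
    show "\<forall>r\<in>tdom n d. \<forall>c\<in>tdom n d. M r c = (\<Sum>j\<in>?J. (\<lambda>(i, z). slice n d (ps ! i) z) j r c)"
    proof (intro ballI)
      fix r c assume rc: "r \<in> tdom n d" "c \<in> tdom n d"
      have "M r c = ShiftedTensor n d M (shifted_point n r c)"
        by (rule ShiftedTensor_shifted_point[OF assms(1) rc, symmetric])
      also have "\<dots> = (\<Sum>i<length ps. split_value (ps ! i) (shifted_point n r c))"
        using assms(2) shifted_point_in_tdom[OF assms(1) rc]
        by (simp add: split_decomposition_def sum_list_sum_nth atLeast0LessThan)
      also have "\<dots> = (\<Sum>i<length ps. \<Sum>z\<in>?Z i. slice n d (ps ! i) z r c)"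
        by (intro sum.cong refl) (rule sum_slice[OF rc(2), symmetric])
      also have "\<dots> = (\<Sum>j\<in>?J. (\<lambda>(i, z). slice n d (ps ! i) z) j r c)"
        using fin by (subst sum.Sigma) (auto simp: case_prod_beta)
      finally show "M r c = (\<Sum>j\<in>?J. (\<lambda>(i, z). slice n d (ps ! i) z) j r c)" .
    qed
  qed
  also have "card ?J = (\<Sum>p\<leftarrow>ps. n ^ card (monochromatic_boundaries d (colour p)))"
    using fin by (simp add: card_SigmaI card_PiE finite_monochromatic_boundaries sum_list_sum_nth atLeast0LessThan)
  finally show ?thesis .
qed

theorem theorem4p2:
  fixes M :: "nat list \<Rightarrow> nat list \<Rightarrow> 'a::field" and n d :: nat
  assumes "n \<ge> 1" and "d \<ge> 1"
  shows "real (Lncsm (n^2) (d + 1) (ShiftedTensor n d M))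
           \<ge> real (PT_rank n d M) / real n powr (real d - log 2 (real d) + 1)"
proof -
  let ?L = "Lncsm (n^2) (d + 1) (ShiftedTensor n d M)"
  let ?P = "real n powr (real d - log 2 (real d) + 1)"
  obtain ps where ps: "length ps \<le> ?L" "split_decomposition (n^2) (Suc d) (ShiftedTensor n d M) ps"
    using Lncsm_split_decomposition[of "d + 1"] by auto
  have "real (PT_rank n d M) \<le> (\<Sum>p\<leftarrow>ps. real n ^ card (monochromatic_boundaries d (colour p)))"
    using of_nat_mono[OF PT_rank_ShiftedTensor_le[OF assms(1) ps(2)]]
    by (simp flip: sum_list_of_nat add: o_def)
  also have "\<dots> \<le> (\<Sum>p\<leftarrow>ps. ?P)"
    using ps(2) assms by (intro sum_list_mono power_card_monochromatic_boundaries_le)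
      (auto simp: split_decomposition_def)
  also have "\<dots> \<le> real ?L * ?P"
    using ps(1) by (simp add: sum_list_triv mult_right_mono)
  finally show ?thesis
    using assms(1) by (simp add: divide_le_eq)
qed

end
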